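(* Let $X$ be a separable Banach space over $\mathbb{K}\in\{\mathbb{R},\mathbb{C}\}$ and $T\colon X\to X$ a bounded linear operator. If there exists a uniformly Li-Yorke scrambled subset of $X$ which is locally residual, then the whole space $X$ is uniformly Li-Yorke scrambled for $T$.
   Context: A subset $S\subset X$ with at least two points is uniformly Li-Yorke scrambled for $T$ if there exist sequences $\{p_n\}$, $\{q_n\}$ in $\mathbb{N}$ such that for all distinct $x,y\in S$: $\lim_n\|T^{p_n}x-T^{p_n}y\|=0$ and $\lim_n\|T^{q_n}x-T^{q_n}y\|=\infty$. A subset $A\subset X$ is locally residual if there is a nonempty open $U\subset X$ such that $A\cap U$ is residual in $U$ (contains a dense $G_\delta$ subset of $U$). *)

theory Defs
  imports "HOL-Analysis.Analysis"
begin

definition unif_LY_scrambled :: "('a::real_normed_vector \<Rightarrow> 'a) \<Rightarrow> 'a set \<Rightarrow> bool" where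
  "unif_LY_scrambled T S \<longleftrightarrow>
     (\<exists>x\<in>S. \<exists>y\<in>S. x \<noteq> y) \<and>
     (\<exists>p q :: nat \<Rightarrow> nat. \<forall>x\<in>S. \<forall>y\<in>S. x \<noteq> y \<longrightarrow>
        ((\<lambda>n. norm ((T ^^ p n) x - (T ^^ p n) y)) \<longlonglongrightarrow> 0) \<and>
        filterlim (\<lambda>n. norm ((T ^^ q n) x - (T ^^ q n) y)) at_top sequentially)"

definition residual_in :: "'a::topological_space set \<Rightarrow> 'a set \<Rightarrow> bool" where
  "residual_in U A \<longleftrightarrow>
     (\<exists>G. G \<subseteq> A \<inter> U \<and> gdelta_in (top_of_set U) G \<and> U \<subseteq> closure G)"

definition locally_residual :: "'a::topological_space set \<Rightarrow> bool" where
  "locally_residual A \<longleftrightarrow> (\<exists>U. open U \<and> U \<noteq> {} \<and> residual_in U A)"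

end

theory Submission
  imports Defs
begin

(* If S is residual in a nonempty open set U, the Baire category theorem shows that S meets
   each translate S - z for z small enough (Pettis' argument), so every sufficiently short
   vector is a difference of two points of S. For linear T the Li-Yorke behaviour of a pair
   depends only on its difference and is unchanged by nonzero scaling, so the sequences that
   make S uniformly scrambled work for every pair of distinct points of X. *)

lemma closure_of_Int_gdelta_in:
  assumes X: "completely_metrizable_space X"
    and S: "gdelta_in X S" "X closure_of S = topspace X"
    and T: "gdelta_in X T" "X closure_of T = topspace X"
  shows "X closure_of (S \<inter> T) = topspace X"
proof -
  obtain \<S> where \<S>: "countable \<S>" "\<And>B. B \<in> \<S> \<Longrightarrow> openin X B" "\<Inter>\<S> = S"
    using S(1) unfolding gdelta_in_alt intersection_of_def by blast
  obtain \<T> where \<T>: "countable \<T>" "\<And>B. B \<in> \<T> \<Longrightarrow> openin X B" "\<Inter>\<T> = T"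
    using T(1) unfolding gdelta_in_alt intersection_of_def by blast
  have dense: "X closure_of B = topspace X" if "B \<in> \<S> \<union> \<T>" for B
  proof -
    have "S \<subseteq> B \<or> T \<subseteq> B"
      using that \<S>(3) \<T>(3) by blast
    then have "topspace X \<subseteq> X closure_of B"
      using S(2) T(2) closure_of_mono by metis
    then show ?thesis
      by (simp add: closure_of_subset_topspace subset_antisym)
  qed
  have "X closure_of \<Inter>(\<S> \<union> \<T>) = topspace X"
    using \<S>(1,2) \<T>(1,2) dense by (intro Baire_category[OF disjI1[OF X]]) auto
  moreover have "\<Inter>(\<S> \<union> \<T>) = S \<inter> T"
    using \<S>(3) \<T>(3) by blast
  ultimately show ?thesis
    by simp
qed

lemma residual_in_Int:
  fixes U :: "'a::complete_space set"
  assumes "open U" "residual_in U A" "residual_in U B"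
  shows "residual_in U (A \<inter> B)"
proof -
  obtain G where G: "G \<subseteq> A \<inter> U" "gdelta_in (top_of_set U) G" "U \<subseteq> closure G"
    using assms(2) unfolding residual_in_def by blast
  obtain H where H: "H \<subseteq> B \<inter> U" "gdelta_in (top_of_set U) H" "U \<subseteq> closure H"
    using assms(3) unfolding residual_in_def by blast
  have X: "completely_metrizable_space (top_of_set U)"
    using completely_metrizable_space_openin[OF completely_metrizable_space_euclidean] assms(1)
    by simp
  have dense_iff: "top_of_set U closure_of C = U \<longleftrightarrow> U \<subseteq> closure C" if "C \<subseteq> U" for C
    using that by (auto simp: closure_of_subtopology_open)
  have "top_of_set U closure_of (G \<inter> H) = U"
    using closure_of_Int_gdelta_in[OF X] G H dense_iff by auto
  then have "U \<subseteq> closure (G \<inter> H)"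
    using dense_iff[of "G \<inter> H"] G(1) by blast
  moreover have "gdelta_in (top_of_set U) (G \<inter> H)"
    using G(2) H(2) by (rule gdelta_in_Int)
  ultimately show ?thesis
    unfolding residual_in_def using G(1) H(1) by (intro exI[of _ "G \<inter> H"]) auto
qed

lemma residual_in_open_subset:
  assumes "residual_in U A" "open V" "V \<subseteq> U"
  shows "residual_in V A"
proof -
  obtain G where G: "G \<subseteq> A \<inter> U" "gdelta_in (top_of_set U) G" "U \<subseteq> closure G"
    using assms(1) unfolding residual_in_def by blast
  obtain H where "gdelta_in euclidean H" "G = H \<inter> U"
    using G(2) gdelta_in_subtopology by metis
  then have "gdelta_in (top_of_set V) (G \<inter> V)"
    using assms(3) gdelta_in_subtopology by (metis inf.absorb_iff2 inf_assoc)
  moreover have "V \<subseteq> closure (G \<inter> V)"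
    using open_Int_closure_subset[OF assms(2), of G] G(3) assms(3) by (auto simp: Int_commute)
  ultimately show ?thesis
    unfolding residual_in_def using G(1) by (intro exI[of _ "G \<inter> V"]) auto
qed

lemma homeomorphic_map_translation:
  fixes a :: "'a::real_normed_vector"
  shows "homeomorphic_map (top_of_set U) (top_of_set ((+) a ` U)) ((+) a)"
  unfolding homeomorphic_map_maps homeomorphic_maps_def continuous_map_subtopology_eu
  by (intro exI[of _ "(+) (- a)"]) (auto intro!: continuous_intros)

lemma residual_in_translation:
  fixes a :: "'a::real_normed_vector"
  assumes "residual_in U A"
  shows "residual_in ((+) a ` U) ((+) a ` A)"
proof -
  obtain G where G: "G \<subseteq> A \<inter> U" "gdelta_in (top_of_set U) G" "U \<subseteq> closure G"
    using assms unfolding residual_in_def by blast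
  have "gdelta_in (top_of_set ((+) a ` U)) ((+) a ` G)"
    using homeomorphic_map_gdeltaness[OF homeomorphic_map_translation] G(1,2) by auto
  moreover have "(+) a ` U \<subseteq> closure ((+) a ` G)"
    using G(3) by (simp add: closure_translation image_mono)
  ultimately show ?thesis
    unfolding residual_in_def using G(1) by (intro exI[of _ "(+) a ` G"]) auto
qed

lemma residual_in_nonempty:
  assumes "residual_in U A" "U \<noteq> {}"
  shows "A \<inter> U \<noteq> {}"
  using assms unfolding residual_in_def by fastforce

lemma locally_residual_small_translates_meet:
  fixes A :: "'a::banach set"
  assumes "locally_residual A"
  obtains r where "r > 0" "\<And>z. norm z < r \<Longrightarrow> \<exists>x\<in>A. x + z \<in> A"
proof -
  obtain U where U: "open U" "U \<noteq> {}" "residual_in U A"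
    using assms unfolding locally_residual_def by blast
  obtain u e where "e > 0" "ball u e \<subseteq> U"
    using U(1,2) open_contains_ball by blast
  define r where "r = e / 2"
  have "\<exists>x\<in>A. x + z \<in> A" if z: "norm z < r" for z
  proof -
    have "ball u r \<subseteq> ball u e"
      using \<open>e > 0\<close> by (intro subset_ball) (simp add: r_def)
    also have "\<dots> \<subseteq> U"
      by fact
    finally have "residual_in (ball u r) A"
      using residual_in_open_subset[OF U(3)] by blast
    have "ball u r \<subseteq> (+) (- z) ` U"
    proof
      fix v assume "v \<in> ball u r"
      then have "dist u (v + z) < e"
        using z norm_triangle_lt[of "u - v" "- z" e] by (auto simp: r_def dist_norm algebra_simps)
      then show "v \<in> (+) (- z) ` U"
        using \<open>ball u e \<subseteq> U\<close> by (auto intro!: image_eqI[of _ _ "v + z"])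
    qed
    then have "residual_in (ball u r) ((+) (- z) ` A)"
      using residual_in_open_subset[OF residual_in_translation[OF U(3)]] by blast
    with \<open>residual_in (ball u r) A\<close> have "residual_in (ball u r) (A \<inter> (+) (- z) ` A)"
      by (simp add: residual_in_Int)
    then obtain y where "y \<in> A" "- z + y \<in> A"
      using residual_in_nonempty \<open>e > 0\<close> by (fastforce simp: r_def)
    then show ?thesis
      by (intro bexI[of _ "- z + y"]) auto
  qed
  moreover have "r > 0"
    using \<open>e > 0\<close> by (simp add: r_def)
  ultimately show ?thesis
    using that by blast
qed

lemma linear_funpow:
  fixes f :: "'a::real_vector \<Rightarrow> 'a"
  shows "linear f \<Longrightarrow> linear (f ^^ n)"
  by (induction n) (simp_all add: linear_id linear_compose)

definition irregular_along :: "('a::real_normed_vector \<Rightarrow> 'a) \<Rightarrow> (nat \<Rightarrow> nat) \<Rightarrow> (nat \<Rightarrow> nat) \<Rightarrow> 'a \<Rightarrow> bool"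
  where "irregular_along T p q v \<longleftrightarrow>
    ((\<lambda>n. norm ((T ^^ p n) v)) \<longlonglongrightarrow> 0) \<and> filterlim (\<lambda>n. norm ((T ^^ q n) v)) at_top sequentially"

lemma unif_LY_scrambled_linear_iff:
  fixes T :: "'a::real_normed_vector \<Rightarrow> 'a"
  assumes "linear T"
  shows "unif_LY_scrambled T S \<longleftrightarrow> (\<exists>x\<in>S. \<exists>y\<in>S. x \<noteq> y) \<and>
    (\<exists>p q. \<forall>x\<in>S. \<forall>y\<in>S. x \<noteq> y \<longrightarrow> irregular_along T p q (x - y))"
  using linear_funpow[OF assms] by (simp add: unif_LY_scrambled_def irregular_along_def linear_diff)

lemma irregular_along_scaleR:
  assumes "linear T" "c \<noteq> 0" "irregular_along T p q v"
  shows "irregular_along T p q (c *\<^sub>R v)"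
proof -
  have norm_scale: "norm ((T ^^ n) (c *\<^sub>R v)) = \<bar>c\<bar> * norm ((T ^^ n) v)" for n
    using linear_funpow[OF assms(1)] by (simp add: linear_scale)
  have "(\<lambda>n. \<bar>c\<bar> * norm ((T ^^ p n) v)) \<longlonglongrightarrow> 0"
    using assms(3) unfolding irregular_along_def by (intro tendsto_mult_right_zero) simp
  moreover have "filterlim (\<lambda>n. \<bar>c\<bar> * norm ((T ^^ q n) v)) at_top sequentially"
    using assms(2,3) unfolding irregular_along_def
    by (intro filterlim_tendsto_pos_mult_at_top[OF tendsto_const]) auto
  ultimately show ?thesis
    unfolding irregular_along_def norm_scale by blast
qed

lemma irregular_along_if_ball:
  assumes "linear T" "r > 0" "\<And>z. z \<noteq> 0 \<Longrightarrow> norm z < r \<Longrightarrow> irregular_along T p q z" "v \<noteq> 0"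
  shows "irregular_along T p q v"
proof -
  define c where "c = r / (2 * norm v)"
  have "c > 0"
    using assms(2,4) by (simp add: c_def)
  moreover have "norm (c *\<^sub>R v) < r"
    using assms(2,4) by (simp add: c_def)
  ultimately have "irregular_along T p q (c *\<^sub>R v)"
    using assms(3,4) by simp
  then show ?thesis
    using irregular_along_scaleR[OF assms(1), of "inverse c" p q "c *\<^sub>R v"] \<open>c > 0\<close> by simp
qed

theorem proposition3p12:
  fixes T :: "'a::banach \<Rightarrow> 'a"
  assumes separable: "\<exists>D. countable D \<and> closure D = (UNIV :: 'a set)"
    and lin: "bounded_linear T"
    and ex: "\<exists>S. unif_LY_scrambled T S \<and> locally_residual S"
  shows "unif_LY_scrambled T (UNIV :: 'a set)"
proof -
  have T: "linear T"
    using lin bounded_linear.linear by blast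
  obtain S where scrambled: "unif_LY_scrambled T S" and "locally_residual S"
    using ex by blast
  obtain x0 y0 :: 'a where "x0 \<noteq> y0"
    using scrambled unfolding unif_LY_scrambled_def by blast
  obtain p q where pq: "\<And>x y. x \<in> S \<Longrightarrow> y \<in> S \<Longrightarrow> x \<noteq> y \<Longrightarrow> irregular_along T p q (x - y)"
    using scrambled unfolding unif_LY_scrambled_linear_iff[OF T] by meson
  obtain r where "r > 0" and translates: "\<And>z. norm z < r \<Longrightarrow> \<exists>x\<in>S. x + z \<in> S"
    using locally_residual_small_translates_meet[OF \<open>locally_residual S\<close>] by blast
  have "irregular_along T p q z" if "z \<noteq> 0" "norm z < r" for z
    using translates[OF that(2)] pq[of "_ + z"] that(1) by fastforce
  then have "irregular_along T p q (x - y)" if "x \<noteq> y" for x y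
    using irregular_along_if_ball[OF T \<open>r > 0\<close>] that by simp
  then show ?thesis
    unfolding unif_LY_scrambled_linear_iff[OF T] using \<open>x0 \<noteq> y0\<close> by blast
qed

end
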